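(* Let $p$ be a prime, $\alpha\ge1$ and $\beta\ge0$. For every function $f:\mathbb{Z}_{p^\alpha}\to\mathbb{Z}$, $p^\beta$ divides $\Delta^{\beta(p^\alpha-1)+1}f(x)$ for all $x\in\mathbb{Z}_{p^\alpha}$.
   Context: For a function $f$ on $\mathbb{Z}_q=\mathbb{Z}/q\mathbb{Z}$ with values in $\mathbb{Z}$, $\Delta f(x):=f(x+1)-f(x)$ and $\Delta^k$ denotes the $k$-fold iterate. *)

theory Defs
  imports Main "HOL-Computational_Algebra.Primes"
begin

text \<open>Functions Z_q \<rightarrow> Z are represented as q-periodic functions int \<Rightarrow> int.\<close>

definition periodic_mod :: "int \<Rightarrow> (int \<Rightarrow> int) \<Rightarrow> bool" where
  "periodic_mod q f \<longleftrightarrow> (\<forall>x. f (x + q) = f x)"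

definition fdiff :: "(int \<Rightarrow> int) \<Rightarrow> (int \<Rightarrow> int)" where
  "fdiff f = (\<lambda>x. f (x + 1) - f x)"

end

theory Submission
  imports Defs
begin

text \<open>Call an integer function zero-mean modulo \<open>q\<close> if its sums over all windows of \<open>q\<close>
consecutive arguments vanish. Such a function is \<open>q\<close>-periodic, and the difference of a
\<open>q\<close>-periodic function is zero-mean. For \<open>q = p^a\<close> we have \<open>(q-1 choose k) \<equiv> (-1)^k (mod p)\<close>,
so \<open>\<Delta>^(q-1) u x \<equiv> (-1)^(q-1) \<Sum>k<q. u (x + k) (mod p)\<close>; hence \<open>\<Delta>^(q-1)\<close> maps a zero-mean
function to \<open>p\<close> times an integer function, which is again zero-mean. Iterating \<open>\<beta>\<close> times,
starting from the zero-mean function \<open>\<Delta> f\<close>, gives the factor \<open>p^\<beta>\<close>.\<close>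

lemma fdiff_funpow_eq_sum:
  "(fdiff ^^ n) u x = (\<Sum>k\<le>n. (-1) ^ (n - k) * int (n choose k) * u (x + int k))"
proof (induction n arbitrary: x)
  case 0
  then show ?case by simp
next
  case (Suc n)
  have shift: "(\<Sum>k\<le>n. (-1) ^ (n - k) * int (n choose k) * u (x + int k))
      = (-1) ^ n * u x + (\<Sum>k<n. (-1) ^ (n - Suc k) * int (n choose Suc k) * u (x + int (Suc k)))"
    by (subst sum.atMost_shift) simp
  have sign: "(\<Sum>k\<le>n. (-1) ^ (n - k) * int (n choose Suc k) * u (x + int (Suc k)))
      = - (\<Sum>k<n. (-1) ^ (n - Suc k) * int (n choose Suc k) * u (x + int (Suc k)))"
  proof -
    have "(\<Sum>k\<le>n. (-1) ^ (n - k) * int (n choose Suc k) * u (x + int (Suc k)))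
        = (\<Sum>k<n. (-1) ^ (n - k) * int (n choose Suc k) * u (x + int (Suc k)))"
      by (simp add: lessThan_Suc_atMost[symmetric] binomial_eq_0)
    also have "\<dots> = - (\<Sum>k<n. (-1) ^ (n - Suc k) * int (n choose Suc k) * u (x + int (Suc k)))"
      unfolding sum_negf[symmetric] by (rule sum.cong) (auto simp flip: Suc_diff_Suc)
    finally show ?thesis .
  qed
  have "(fdiff ^^ Suc n) u x = (fdiff ^^ n) u (x + 1) - (fdiff ^^ n) u x"
    by (simp add: fdiff_def)
  also have "\<dots> = (\<Sum>k\<le>n. (-1) ^ (n - k) * int (n choose k) * u (x + int (Suc k)))
      - (\<Sum>k\<le>n. (-1) ^ (n - k) * int (n choose k) * u (x + int k))"
    by (simp add: Suc.IH add_ac)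
  also have "\<dots> = (\<Sum>k\<le>Suc n. (-1) ^ (Suc n - k) * int (Suc n choose k) * u (x + int k))"
    using sign by (subst sum.atMost_Suc_shift) (simp add: distrib_left distrib_right sum.distrib shift)
  finally show ?case .
qed

lemma fdiff_funpow_scale: "(fdiff ^^ n) (\<lambda>x. c * u x) = (\<lambda>x. c * (fdiff ^^ n) u x)"
  by (induction n) (auto simp: fdiff_def algebra_simps)

lemma periodic_mod_fdiff_funpow:
  assumes "periodic_mod q v"
  shows "periodic_mod q ((fdiff ^^ n) v)"
proof (induction n)
  case 0
  then show ?case using assms by simp
next
  case (Suc n)
  have "(fdiff ^^ n) v (x + 1 + q) = (fdiff ^^ n) v (x + 1)"
    and "(fdiff ^^ n) v (x + q) = (fdiff ^^ n) v x" for x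
    using Suc.IH by (simp_all only: periodic_mod_def)
  then show ?case
    unfolding periodic_mod_def by (simp add: fdiff_def ac_simps)
qed

definition zero_mean_mod :: "nat \<Rightarrow> (int \<Rightarrow> int) \<Rightarrow> bool" where
  "zero_mean_mod q u \<longleftrightarrow> (\<forall>x. (\<Sum>k<q. u (x + int k)) = 0)"

lemma zero_mean_mod_imp_periodic_mod:
  assumes "zero_mean_mod q u"
  shows "periodic_mod (int q) u"
  unfolding periodic_mod_def
proof
  fix x
  have "(\<Sum>k<Suc q. u (x + int k)) = u x + (\<Sum>k<q. u (x + 1 + int k))"
    by (subst sum.lessThan_Suc_shift) (simp add: add_ac)
  then have "(\<Sum>k<q. u (x + int k)) + u (x + int q) = u x + (\<Sum>k<q. u (x + 1 + int k))"
    by simp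
  then show "u (x + int q) = u x"
    using assms by (simp add: zero_mean_mod_def)
qed

lemma zero_mean_mod_fdiff:
  assumes "periodic_mod (int q) v"
  shows "zero_mean_mod q (fdiff v)"
  unfolding zero_mean_mod_def
proof
  fix x
  have "(\<Sum>k<q. fdiff v (x + int k)) = (\<Sum>k<q. v (x + int (Suc k)) - v (x + int k))"
    by (simp add: fdiff_def add_ac)
  also have "\<dots> = v (x + int q) - v x"
    by (subst sum_lessThan_telescope) simp
  finally show "(\<Sum>k<q. fdiff v (x + int k)) = 0"
    using assms by (simp add: periodic_mod_def)
qed

lemma zero_mean_mod_fdiff_funpow:
  assumes "zero_mean_mod q u"
  shows "zero_mean_mod q ((fdiff ^^ n) u)"
proof (cases n)
  case 0
  then show ?thesis using assms by simp
next
  case (Suc m)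
  have "periodic_mod (int q) ((fdiff ^^ m) u)"
    by (intro periodic_mod_fdiff_funpow zero_mean_mod_imp_periodic_mod assms)
  then show ?thesis
    unfolding Suc by (simp add: zero_mean_mod_fdiff)
qed

lemma zero_mean_mod_cancel_factor:
  assumes "zero_mean_mod q (\<lambda>x. c * w x)" and "c \<noteq> 0"
  shows "zero_mean_mod q w"
  using assms by (simp add: zero_mean_mod_def flip: sum_distrib_left)

lemma prime_dvd_prime_power_choose:
  fixes p a j :: nat
  assumes p: "prime p" and j: "0 < j" "j < p ^ a"
  shows "p dvd (p ^ a choose j)"
proof (rule ccontr)
  assume "\<not> p dvd (p ^ a choose j)"
  then have "coprime p (p ^ a choose j)"
    using p by (simp add: prime_imp_coprime)
  then have "coprime (p ^ a) (p ^ a choose j)"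
    by simp
  moreover have "p ^ a dvd j * (p ^ a choose j)"
    using times_binomial_minus1_eq[OF j(1), of "p ^ a"] by simp
  ultimately have "p ^ a dvd j"
    using coprime_dvd_mult_left_iff by blast
  then show False
    using j by (simp add: nat_dvd_not_less)
qed

lemma prime_power_minus_one_choose_cong:
  fixes p a :: nat
  assumes p: "prime p" and "k < p ^ a"
  shows "int p dvd int (p ^ a - 1 choose k) - (-1) ^ k"
  using \<open>k < p ^ a\<close>
proof (induction k)
  case 0
  then show ?case by simp
next
  case (Suc k)
  have "p ^ a = Suc (p ^ a - 1)"
    using Suc.prems by simp
  then have pascal: "int (p ^ a choose Suc k) = int (p ^ a - 1 choose k) + int (p ^ a - 1 choose Suc k)"
    by (metis binomial_Suc_Suc of_nat_add)
  have "int p dvd int (p ^ a choose Suc k)"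
    using prime_dvd_prime_power_choose[OF p, of "Suc k" a] Suc.prems by simp
  then have "int p dvd int (p ^ a choose Suc k) - (int (p ^ a - 1 choose k) - (-1) ^ k)"
    using Suc by simp
  then show ?case
    by (simp add: pascal)
qed

lemma prime_dvd_fdiff_funpow_zero_mean:
  fixes p a :: nat
  assumes p: "prime p" and u: "zero_mean_mod (p ^ a) u"
  shows "int p dvd (fdiff ^^ (p ^ a - 1)) u x"
proof -
  define m where "m = p ^ a - 1"
  have q: "p ^ a = Suc m"
    using p by (simp add: m_def prime_gt_0_nat)
  have "(fdiff ^^ m) u x - (-1) ^ m * (\<Sum>k\<le>m. u (x + int k))
      = (\<Sum>k\<le>m. (-1) ^ (m - k) * (int (m choose k) - (-1) ^ k) * u (x + int k))"
    unfolding fdiff_funpow_eq_sum sum_distrib_left sum_subtractf[symmetric]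
  proof (rule sum.cong)
    fix k assume "k \<in> {..m}"
    then have "(-1::int) ^ m = (-1) ^ (m - k) * (-1) ^ k"
      by (simp flip: power_add)
    then show "(-1) ^ (m - k) * int (m choose k) * u (x + int k) - (-1) ^ m * u (x + int k)
        = (-1) ^ (m - k) * (int (m choose k) - (-1) ^ k) * u (x + int k)"
      by (simp add: algebra_simps)
  qed simp
  moreover have "int p dvd (\<Sum>k\<le>m. (-1) ^ (m - k) * (int (m choose k) - (-1) ^ k) * u (x + int k))"
    using prime_power_minus_one_choose_cong[OF p] q m_def
    by (intro dvd_sum) (simp add: less_Suc_eq_le)
  moreover have "(\<Sum>k\<le>m. u (x + int k)) = 0"
    using u by (simp add: zero_mean_mod_def q lessThan_Suc_atMost)
  ultimately show ?thesis
    by (simp add: m_def)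
qed

lemma fdiff_funpow_zero_mean_factor:
  fixes p a :: nat
  assumes p: "prime p" and u: "zero_mean_mod (p ^ a) u"
  shows "\<exists>w. zero_mean_mod (p ^ a) w \<and> (fdiff ^^ (p ^ a - 1)) u = (\<lambda>x. int p * w x)"
proof -
  define w where "w x = (fdiff ^^ (p ^ a - 1)) u x div int p" for x
  have eq: "(fdiff ^^ (p ^ a - 1)) u = (\<lambda>x. int p * w x)"
    using prime_dvd_fdiff_funpow_zero_mean[OF p u] by (auto simp: w_def)
  have "zero_mean_mod (p ^ a) (\<lambda>x. int p * w x)"
    using zero_mean_mod_fdiff_funpow[OF u] by (simp flip: eq)
  then have "zero_mean_mod (p ^ a) w"
    using p by (simp add: zero_mean_mod_cancel_factor prime_gt_0_nat)
  with eq show ?thesis by blast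
qed

lemma fdiff_funpow_zero_mean_prime_power_factor:
  fixes p a b :: nat
  assumes p: "prime p" and u: "zero_mean_mod (p ^ a) u"
  shows "\<exists>w. (fdiff ^^ (b * (p ^ a - 1))) u = (\<lambda>x. int p ^ b * w x)"
  using u
proof (induction b arbitrary: u)
  case 0
  then show ?case by auto
next
  case (Suc b)
  obtain v where v: "zero_mean_mod (p ^ a) v" "(fdiff ^^ (p ^ a - 1)) u = (\<lambda>x. int p * v x)"
    using fdiff_funpow_zero_mean_factor[OF p Suc.prems] by blast
  obtain w where w: "(fdiff ^^ (b * (p ^ a - 1))) v = (\<lambda>x. int p ^ b * w x)"
    using Suc.IH[OF v(1)] by blast
  have "(fdiff ^^ (Suc b * (p ^ a - 1))) u = (fdiff ^^ (b * (p ^ a - 1))) ((fdiff ^^ (p ^ a - 1)) u)"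
    by (simp only: mult_Suc add.commute[of "p ^ a - 1"] funpow_add comp_def)
  also have "\<dots> = (\<lambda>x. int p * (int p ^ b * w x))"
    by (simp only: v(2) fdiff_funpow_scale w)
  also have "\<dots> = (\<lambda>x. int p ^ Suc b * w x)"
    by (simp add: ac_simps)
  finally show ?case by blast
qed

theorem lemma3p3:
  fixes p \<alpha> \<beta> :: nat and f :: "int \<Rightarrow> int"
  assumes "prime p" and "\<alpha> \<ge> 1"
    and "periodic_mod (int (p ^ \<alpha>)) f"
  shows "\<forall>x. int (p ^ \<beta>) dvd (fdiff ^^ (\<beta> * (p ^ \<alpha> - 1) + 1)) f x"
proof
  fix x
  have "zero_mean_mod (p ^ \<alpha>) (fdiff f)"
    using assms(3) by (rule zero_mean_mod_fdiff)
  then obtain w where "(fdiff ^^ (\<beta> * (p ^ \<alpha> - 1))) (fdiff f) = (\<lambda>x. int p ^ \<beta> * w x)"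
    using fdiff_funpow_zero_mean_prime_power_factor[OF assms(1)] by blast
  moreover have "(fdiff ^^ (\<beta> * (p ^ \<alpha> - 1) + 1)) f = (fdiff ^^ (\<beta> * (p ^ \<alpha> - 1))) (fdiff f)"
    by (simp only: Suc_eq_plus1[symmetric] funpow_Suc_right o_apply)
  ultimately show "int (p ^ \<beta>) dvd (fdiff ^^ (\<beta> * (p ^ \<alpha> - 1) + 1)) f x"
    by simp
qed

end
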